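(* Let $p_i$ and $p_j$ ($i\ne j$) be two input-state walks in the colored union graph $\mathcal G_c$ of a switched system $(A_k,B_k)_{k=1}^N$, and let $\hat p_i,\hat p_j$ be their MDG-paths in the multi-layer dynamic graph $\hat{\mathcal G}_{\bar l}$ with $\bar l\ge\max\{|p_i|,|p_j|\}$. If either $p_i$ and $p_j$ are vertex-disjoint, or $\mathrm{ins}(p_i^c,p_j^c)\neq\emptyset$ and $\mathrm{Pins}(p_i^c\backslash p_j^c)$ and $\mathrm{Pins}(p_j^c\backslash p_i^c)$ have distinct color indices, then $\hat p_i$ and $\hat p_j$ are vertex-disjoint.
   Context: Setting: a switched system with subsystems $(A_k,B_k)$, $A_k\in\mathbb{R}^{n\times n}$, $B_k\in\mathbb{R}^{n\times m_k}$, $k\in[N]=\{1,\dots,N\}$; $A_k(p,j)$, $B_l(q,j)$ denote entries. Colored union graph $\mathcal G_c$: vertices $X=\{x_1,\dots,x_n\}$ and $U=\bigcup_{k}U_k$, $U_k=\{u^k_1,\dots,u^k_{m_k}\}$; for each $k$ and each $A_k(j,q)\ne0$ there is a state edge $(x_q,x_j)$ with color index $k$ (parallel edges of different colors are allowed), and for each $B_k(j,q)\neq 0$ an input edge $(u^k_q,x_j)$ with color index $k$. An input-state walk is a walk with tail in $U$ and head in $X$. The color index of a walk is the sequence of color indices of its edges. The reverse walk $p^c$ of $p=(e_1,\dots,e_k)$ is $(e_k^c,\dots,e_1^c)$ where $e^c$ reverses the direction of $e$ (keeping its color). For walks $p_1=(v_{i_1},\dots,v_{i_k})$ and $p_2=(v_{j_1},\dots,v_{j_{k'}})$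 (as vertex sequences), $\mathrm{ins}(p_1,p_2)=v_{i_{k^*}}$ with $k^*=\min\{q: i_q=j_q\}$ (the first vertex two walkers moving simultaneously along the walks occupy at the same time), and $\mathrm{ins}(p_1,p_2)=\emptyset$ if no such $q$ exists; if $\mathrm{ins}(p_1,p_2)\ne\emptyset$, $\mathrm{Pins}(p_1\backslash p_2)=(v_{i_1},\dots,v_{i_{k^*}})$ and $\mathrm{Pins}(p_2\backslash p_1)=(v_{j_1},\dots,v_{j_{k^*}})$. Multi-layer dynamic graph $\hat{\mathcal G}_{\bar l}$: layers $0,\dots,\bar l$. Layer 0: $\hat X_0=\{x^{00}_{p0}:p\in[n]\}$, $\hat U_0=\{u^{00}_{k,j0}: j\in[N],k\in[m_j]\}$, edges $(u^{00}_{k,j0},x^{00}_{q0})$ when $B_j(q,k)\ne0$. Layer $i\ge1$: $\hat X_i=\{x^{kt}_{ji}: j\in[n],k\in[N],t\in[N^{i-1}]\}$, $\hat U_i=\{u^{kt}_{j,li}: k,l\in[N],j\in[m_l],t\in[N^{i-1}]\}$, edges $(u^{kt}_{j,li},x^{kt}_{qi})$ when $B_l(q,j)\ne0$. Edges $(x^{k1}_{j1},x^{00}_{p0})$ when $A_k(p,j)\ne0$; for $i\ge2$, edges $(x^{kt}_{ji},x^{k't'}_{p,i-1})$ when $A_k(p,j)\ne 0$, for $k,k'\in[N]$, $t'\in[N^{i-2}]$, $t=(k'-1)N^{i-2}+t'$. An edge $(x^{kt}_{ji},\cdot)$ between layers has color index $k$. MDG-path: for an input-state walk $p$ of length $k$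 whose successive edges have colors $i_1,\dots,i_k$ and pass through vertices $u^{i_1}_{j_1},x_{j_2},\dots,x_{j_{k+1}}$, its MDG-path $\hat p$ (in any $\hat{\mathcal G}_{\bar l}$ with $\bar l\ge k$) is the unique path of the form $(u^{i_2,\bullet}_{j_1,i_1,k-1},x^{i_2,\bullet}_{j_2,k-1},x^{i_3,\bullet}_{j_3,k-2},\dots,x^{i_k,1}_{j_k,1},x^{00}_{j_{k+1},0})$, where the copy indices $\bullet$ are those forced by the edge structure (for $k=1$ it is $(u^{00}_{j_1,i_1 0},x^{00}_{j_2,0})$). *)

theory Defs
  imports Complex_Main
begin

text \<open>Switched system: N subsystems, state dimension n, input dimensions m k.
  A k p j is the entry A_k(p,j), B k q j is the entry B_k(q,j); all indices 1-based.
  Entries outside the index ranges are ignored.\<close>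

datatype cvert = X nat
  | U nat nat           \<comment> \<open>U k q = u^k_q\<close>

type_synonym cedge = "cvert \<times> cvert \<times> nat"

definition etail :: "cedge \<Rightarrow> cvert" where "etail e = fst e"
definition ehead :: "cedge \<Rightarrow> cvert" where "ehead e = fst (snd e)"
definition ecol  :: "cedge \<Rightarrow> nat"   where "ecol e = snd (snd e)"

definition cug_edges ::
  "nat \<Rightarrow> nat \<Rightarrow> (nat \<Rightarrow> nat) \<Rightarrow> (nat \<Rightarrow> nat \<Rightarrow> nat \<Rightarrow> real) \<Rightarrow> (nat \<Rightarrow> nat \<Rightarrow> nat \<Rightarrow> real) \<Rightarrow> cedge set"
  where
  "cug_edges N n m A B =
     {(X q, X j, k) | k j q. k \<in> {1..N} \<and> j \<in> {1..n} \<and> q \<in> {1..n} \<and> A k j q \<noteq> 0}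
   \<union> {(U k q, X j, k) | k j q. k \<in> {1..N} \<and> j \<in> {1..n} \<and> q \<in> {1..m k} \<and> B k j q \<noteq> 0}"

definition is_walk ::
  "nat \<Rightarrow> nat \<Rightarrow> (nat \<Rightarrow> nat) \<Rightarrow> (nat \<Rightarrow> nat \<Rightarrow> nat \<Rightarrow> real) \<Rightarrow> (nat \<Rightarrow> nat \<Rightarrow> nat \<Rightarrow> real) \<Rightarrow> cedge list \<Rightarrow> bool"
  where
  "is_walk N n m A B p \<longleftrightarrow> p \<noteq> [] \<and> set p \<subseteq> cug_edges N n m A B \<and>
     (\<forall>s. Suc s < length p \<longrightarrow> ehead (p ! s) = etail (p ! Suc s))"

definition is_input_vertex :: "cvert \<Rightarrow> bool" where
  "is_input_vertex v \<longleftrightarrow> (\<exists>k q. v = U k q)"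

definition is_state_vertex :: "cvert \<Rightarrow> bool" where
  "is_state_vertex v \<longleftrightarrow> (\<exists>j. v = X j)"

definition is_input_state_walk where
  "is_input_state_walk N n m A B p \<longleftrightarrow> is_walk N n m A B p \<and>
     is_input_vertex (etail (hd p)) \<and> is_state_vertex (ehead (last p))"

definition walk_verts :: "cedge list \<Rightarrow> cvert list" where
  "walk_verts p = etail (hd p) # map ehead p"

definition color_index :: "cedge list \<Rightarrow> nat list" where
  "color_index p = map ecol p"

definition rev_edge :: "cedge \<Rightarrow> cedge" where
  "rev_edge e = (ehead e, etail e, ecol e)"

definition rev_walk :: "cedge list \<Rightarrow> cedge list" where
  "rev_walk p = rev (map rev_edge p)"

text \<open>0-based position q of the first common vertex of two simultaneously
  traversed vertex sequences (paper's k* = q + 1).\<close>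
definition ins_pos :: "'v list \<Rightarrow> 'v list \<Rightarrow> nat option" where
  "ins_pos vs ws = (if \<exists>q. q < length vs \<and> q < length ws \<and> vs ! q = ws ! q
     then Some (LEAST q. q < length vs \<and> q < length ws \<and> vs ! q = ws ! q) else None)"

text \<open>ins(p1,p2), None standing for the empty set.\<close>
definition ins :: "cedge list \<Rightarrow> cedge list \<Rightarrow> cvert option" where
  "ins p1 p2 = map_option (\<lambda>q. walk_verts p1 ! q) (ins_pos (walk_verts p1) (walk_verts p2))"

text \<open>Pins(p1 \ p2): the initial subwalk of p1 up to the intersection vertex
  (as a list of edges, so that its color index is defined).\<close>
definition Pins :: "cedge list \<Rightarrow> cedge list \<Rightarrow> cedge list" where
  "Pins p1 p2 = take (the (ins_pos (walk_verts p1) (walk_verts p2))) p1"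

datatype mvert =
    MX nat nat nat nat       \<comment> \<open>MX k t j i = x^{kt}_{ji}\<close>
  | MU nat nat nat nat nat   \<comment> \<open>MU k t j l i = u^{kt}_{j,li}\<close>

definition mdg_vertices ::
  "nat \<Rightarrow> nat \<Rightarrow> (nat \<Rightarrow> nat) \<Rightarrow> nat \<Rightarrow> mvert set" where
  "mdg_vertices N n m lbar =
     {MX 0 0 p 0 | p. p \<in> {1..n}}
   \<union> {MU 0 0 k j 0 | k j. j \<in> {1..N} \<and> k \<in> {1..m j}}
   \<union> {MX k t j i | k t j i. 1 \<le> i \<and> i \<le> lbar \<and> j \<in> {1..n} \<and> k \<in> {1..N} \<and> t \<in> {1..N^(i-1)}}
   \<union> {MU k t j l i | k t j l i. 1 \<le> i \<and> i \<le> lbar \<and> k \<in> {1..N} \<and> l \<in> {1..N}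
        \<and> j \<in> {1..m l} \<and> t \<in> {1..N^(i-1)}}"

definition mdg_edges ::
  "nat \<Rightarrow> nat \<Rightarrow> (nat \<Rightarrow> nat) \<Rightarrow> (nat \<Rightarrow> nat \<Rightarrow> nat \<Rightarrow> real) \<Rightarrow> (nat \<Rightarrow> nat \<Rightarrow> nat \<Rightarrow> real) \<Rightarrow> nat
   \<Rightarrow> (mvert \<times> mvert) set" where
  "mdg_edges N n m A B lbar =
     {(MU 0 0 k j 0, MX 0 0 q 0) | k j q. j \<in> {1..N} \<and> k \<in> {1..m j} \<and> q \<in> {1..n} \<and> B j q k \<noteq> 0}
   \<union> {(MU k t j l i, MX k t q i) | k t j l i q. 1 \<le> i \<and> i \<le> lbar \<and> k \<in> {1..N} \<and> l \<in> {1..N}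
        \<and> j \<in> {1..m l} \<and> t \<in> {1..N^(i-1)} \<and> q \<in> {1..n} \<and> B l q j \<noteq> 0}
   \<union> {(MX k 1 j 1, MX 0 0 p 0) | k j p. 1 \<le> lbar \<and> k \<in> {1..N} \<and> j \<in> {1..n} \<and> p \<in> {1..n}
        \<and> A k p j \<noteq> 0}
   \<union> {(MX k t j i, MX k' t' p (i - 1)) | k t j i k' t' p. 2 \<le> i \<and> i \<le> lbar \<and> k \<in> {1..N}
        \<and> k' \<in> {1..N} \<and> t' \<in> {1..N^(i-2)} \<and> t = (k' - 1) * N^(i-2) + t'
        \<and> j \<in> {1..n} \<and> p \<in> {1..n} \<and> A k p j \<noteq> 0}"

text \<open>P is the MDG-path of the input-state walk p in the MDG with lbar layers:
  a path of the MDG of the prescribed form (copy indices t left free, i.e.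
  determined by the edge structure).\<close>
definition is_mdg_path_of ::
  "nat \<Rightarrow> nat \<Rightarrow> (nat \<Rightarrow> nat) \<Rightarrow> (nat \<Rightarrow> nat \<Rightarrow> nat \<Rightarrow> real) \<Rightarrow> (nat \<Rightarrow> nat \<Rightarrow> nat \<Rightarrow> real) \<Rightarrow> nat
   \<Rightarrow> cedge list \<Rightarrow> mvert list \<Rightarrow> bool" where
  "is_mdg_path_of N n m A B lbar p P \<longleftrightarrow>
     length P = Suc (length p) \<and>
     set P \<subseteq> mdg_vertices N n m lbar \<and>
     (\<forall>s < length p. (P ! s, P ! Suc s) \<in> mdg_edges N n m A B lbar) \<and>
     (\<exists>l q. etail (p ! 0) = U l q \<and>
        (if length p = 1 then P ! 0 = MU 0 0 q l 0
         else (\<exists>t. P ! 0 = MU (ecol (p ! 1)) t q l (length p - 1)))) \<and>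
     (\<forall>s. 1 \<le> s \<and> s < length p \<longrightarrow>
        (\<exists>t j. ehead (p ! (s - 1)) = X j \<and> P ! s = MX (ecol (p ! s)) t j (length p - s))) \<and>
     (\<exists>j. ehead (p ! (length p - 1)) = X j \<and> P ! length p = MX 0 0 j 0)"

end

theory Submission
  imports Defs
begin

(* A state vertex at position s of an MDG-path lies in layer |p| - s, the number of edges of the
   walk still to come, and at such a vertex x^{kt}_{jL} the colour k together with the copy index t
   encodes in base N the colours of the last L edges of the walk; at the input vertex the same
   holds for the whole walk.  So if two MDG-paths share a vertex, the two walks pass through a
   common vertex at the same distance R from their ends and have identical colour sequences from
   there on.  On the reversed walks this common vertex is reached simultaneously at step R, hence
   the first simultaneous intersection happens no later, and both Pins prefixes carry the same
   colour index; both alternatives of the hypothesis are thus violated. *)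

lemma length_walk_verts [simp]: "length (walk_verts p) = Suc (length p)"
  by (simp add: walk_verts_def)

lemma nth_walk_verts:
  "p \<noteq> [] \<Longrightarrow> walk_verts p ! 0 = etail (p ! 0)"
  "0 < s \<Longrightarrow> s \<le> length p \<Longrightarrow> walk_verts p ! s = ehead (p ! (s - 1))"
  by (simp_all add: walk_verts_def hd_conv_nth nth_Cons')

lemma walk_input_edge_color:
  assumes "is_walk N n m A B p" "etail (p ! 0) = U l q"
  shows "ecol (p ! 0) = l"
proof -
  have "p ! 0 \<in> cug_edges N n m A B"
    using assms(1) unfolding is_walk_def by auto
  then show ?thesis
    using assms(2) unfolding cug_edges_def etail_def ecol_def by auto
qed

lemma drop_color_index_Suc:
  "s < length p \<Longrightarrow> drop s (color_index p) = ecol (p ! s) # drop (Suc s) (color_index p)"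
  unfolding color_index_def by (metis Cons_nth_drop_Suc drop_map list.simps(9))

lemma walk_verts_conv_etails:
  assumes "is_walk N n m A B p"
  shows "walk_verts p = map etail p @ [ehead (last p)]"
proof (rule nth_equalityI)
  have ne: "p \<noteq> []" and link: "\<And>s. Suc s < length p \<Longrightarrow> ehead (p ! s) = etail (p ! Suc s)"
    using assms unfolding is_walk_def by auto
  fix i
  assume "i < length (walk_verts p)"
  then consider "i = length p" | "i = 0" | s where "i = Suc s" "Suc s < length p"
    by (cases i) (auto simp: less_Suc_eq)
  then show "walk_verts p ! i = (map etail p @ [ehead (last p)]) ! i"
    by cases (use ne link in \<open>auto simp: nth_walk_verts nth_append last_conv_nth\<close>)
qed simp

lemma walk_verts_rev_walk:
  assumes "is_walk N n m A B p"
  shows "walk_verts (rev_walk p) = rev (walk_verts p)"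
proof -
  have "p \<noteq> []"
    using assms unfolding is_walk_def by simp
  moreover have "rev (walk_verts p) = ehead (last p) # rev (map etail p)"
    using walk_verts_conv_etails[OF assms] by simp
  ultimately show ?thesis
    by (simp add: walk_verts_def rev_walk_def rev_edge_def ehead_def etail_def hd_map hd_rev rev_map comp_def)
qed

lemma color_index_rev_walk: "color_index (rev_walk p) = rev (color_index p)"
  by (simp add: color_index_def rev_walk_def rev_map comp_def rev_edge_def ecol_def)

lemma ins_pos_commute: "ins_pos vs ws = ins_pos ws vs"
proof -
  have "(q < length vs \<and> q < length ws \<and> vs ! q = ws ! q) \<longleftrightarrow> (q < length ws \<and> q < length vs \<and> ws ! q = vs ! q)"
    for q
    by auto
  then show ?thesis
    unfolding ins_pos_def by (simp only:)
qed

lemma ins_pos_le: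
  assumes "k < length vs" "k < length ws" "vs ! k = ws ! k"
  obtains q where "ins_pos vs ws = Some q" "q \<le> k"
proof
  let ?common = "\<lambda>q. q < length vs \<and> q < length ws \<and> vs ! q = ws ! q"
  show "ins_pos vs ws = Some (Least ?common)"
    using assms unfolding ins_pos_def by auto
  show "Least ?common \<le> k"
    using assms by (intro Least_le) simp
qed

lemma Pins_color_index_eq:
  assumes "R \<le> length p1" "R \<le> length p2" "walk_verts p1 ! R = walk_verts p2 ! R"
    and colors: "take R (color_index p1) = take R (color_index p2)"
  shows "color_index (Pins p1 p2) = color_index (Pins p2 p1)"
proof -
  obtain q where q: "ins_pos (walk_verts p1) (walk_verts p2) = Some q" "q \<le> R"
    using ins_pos_le[of R "walk_verts p1" "walk_verts p2"] assms(1-3) by auto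
  have "take q (color_index p1) = take q (color_index p2)"
    using colors \<open>q \<le> R\<close> by (metis min.absorb1 take_take)
  then show ?thesis
    using q(1) ins_pos_commute[of "walk_verts p2"]
    by (simp add: Pins_def color_index_def take_map)
qed

lemma rev_walks_Pins_color_index_eq:
  assumes w1: "is_walk N n m A B p1" and w2: "is_walk N n m A B p2"
    and "a \<le> length p1" "b \<le> length p2" "length p1 - a = length p2 - b"
    and "walk_verts p1 ! a = walk_verts p2 ! b"
    and "drop a (color_index p1) = drop b (color_index p2)"
  shows "color_index (Pins (rev_walk p1) (rev_walk p2)) = color_index (Pins (rev_walk p2) (rev_walk p1))"
proof (rule Pins_color_index_eq)
  let ?R = "length p1 - a"
  have "length p1 - ?R = a" "length p2 - ?R = b"
    using assms(3-5) by auto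
  then show "walk_verts (rev_walk p1) ! ?R = walk_verts (rev_walk p2) ! ?R"
    and "take ?R (color_index (rev_walk p1)) = take ?R (color_index (rev_walk p2))"
    using assms by (simp_all add: walk_verts_rev_walk rev_nth color_index_rev_walk take_rev)
       (simp add: color_index_def)
qed (use assms in \<open>auto simp: rev_walk_def\<close>)

lemma mixed_radix_digits_eq:
  fixes a a' b b' M :: nat
  assumes "(a - 1) * M + b = (a' - 1) * M + b'"
    and "1 \<le> a" "1 \<le> a'" "b \<in> {1..M}" "b' \<in> {1..M}"
  shows "a = a' \<and> b = b'"
proof -
  have "(a - 1) * M + (b - 1) = (a' - 1) * M + (b' - 1)" and "b - 1 < M" "b' - 1 < M"
    using assms by auto
  then have "a - 1 = a' - 1 \<and> b - 1 = b' - 1"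
    by (metis add.commute div_mult_self1 div_less mod_mult_self1 mod_less add_0 less_nat_zero_code)
  then show ?thesis
    using assms by auto
qed

lemma mdg_edge_MX_MX:
  assumes "(MX k t j L, MX k' t' j' L') \<in> mdg_edges N n m A B lbar" "2 \<le> L"
  shows "L' = L - 1 \<and> k' \<in> {1..N} \<and> t' \<in> {1..N ^ (L - 2)} \<and> t = (k' - 1) * N ^ (L - 2) + t'"
  using assms unfolding mdg_edges_def by auto

lemma mdg_edge_MU_MX:
  assumes "(MU k t q l L, MX k' t' j' L') \<in> mdg_edges N n m A B lbar"
  shows "k' = k \<and> t' = t \<and> L' = L"
  using assms unfolding mdg_edges_def by auto

lemma mdg_path_edge:
  assumes "is_mdg_path_of N n m A B lbar p P" "s < length p"
  shows "(P ! s, P ! Suc s) \<in> mdg_edges N n m A B lbar"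
  using assms unfolding is_mdg_path_of_def by blast

lemma mdg_path_nth_cases:
  assumes P: "is_mdg_path_of N n m A B lbar p P" and s: "s \<le> length p"
  obtains (input) l q k t where "s = 0" "etail (p ! 0) = U l q" "P ! 0 = MU k t q l (length p - 1)"
  | (state) j t where "0 < s" "s < length p" "ehead (p ! (s - 1)) = X j"
      "P ! s = MX (ecol (p ! s)) t j (length p - s)"
  | (final) j where "0 < s" "s = length p" "ehead (p ! (s - 1)) = X j" "P ! s = MX 0 0 j 0"
proof -
  consider "s = 0" | "0 < s" "s = length p" | "0 < s" "s < length p"
    using s by linarith
  then show thesis
  proof cases
    case 1
    from P obtain l q where "etail (p ! 0) = U l q"
      and "if length p = 1 then P ! 0 = MU 0 0 q l 0
           else \<exists>t. P ! 0 = MU (ecol (p ! 1)) t q l (length p - 1)"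
      unfolding is_mdg_path_of_def by blast
    then show thesis
      using input 1 by (cases "length p = 1") auto
  next
    case 2
    then show thesis
      using P final unfolding is_mdg_path_of_def by auto
  next
    case 3
    then have "1 \<le> s"
      by simp
    with 3 P show thesis
      using state unfolding is_mdg_path_of_def by blast
  qed
qed

lemma mdg_path_state_step:
  assumes P: "is_mdg_path_of N n m A B lbar p P"
    and s: "0 < s" "Suc s < length p" and Ps: "P ! s = MX k t j L"
  obtains t' j' where "P ! Suc s = MX (ecol (p ! Suc s)) t' j' (L - 1)"
    "ecol (p ! Suc s) \<in> {1..N}" "t' \<in> {1..N ^ (L - 2)}"
    "t = (ecol (p ! Suc s) - 1) * N ^ (L - 2) + t'"
proof -
  have L: "L = length p - s"
    using s Ps by (cases rule: mdg_path_nth_cases[OF P, of s]) auto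
  obtain t' j' where succ: "P ! Suc s = MX (ecol (p ! Suc s)) t' j' (length p - Suc s)"
    using s by (cases rule: mdg_path_nth_cases[OF P, of "Suc s"]) auto
  have "(MX k t j L, MX (ecol (p ! Suc s)) t' j' (length p - Suc s)) \<in> mdg_edges N n m A B lbar"
    using mdg_path_edge[OF P, of s] s Ps succ by simp
  moreover have "2 \<le> L"
    using L s by linarith
  ultimately have "ecol (p ! Suc s) \<in> {1..N} \<and> t' \<in> {1..N ^ (L - 2)}
      \<and> t = (ecol (p ! Suc s) - 1) * N ^ (L - 2) + t'"
    using mdg_edge_MX_MX by blast
  then show thesis
    using that succ L by (simp add: diff_Suc)
qed

lemma mdg_path_input_successor:
  assumes P: "is_mdg_path_of N n m A B lbar p P" and "2 \<le> length p" "P ! 0 = MU k t q l L"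
  obtains j where "P ! 1 = MX k t j L"
proof -
  have "0 < length p"
    using assms(2) by linarith
  obtain t' j where P1: "P ! 1 = MX (ecol (p ! 1)) t' j (length p - 1)"
    using assms(2) by (cases rule: mdg_path_nth_cases[OF P, of 1]) auto
  have "(MU k t q l L, MX (ecol (p ! 1)) t' j (length p - 1)) \<in> mdg_edges N n m A B lbar"
    using mdg_path_edge[OF P \<open>0 < length p\<close>] assms(3) P1 by simp
  then show thesis
    using that P1 mdg_edge_MU_MX by blast
qed

lemma mdg_path_state_vertex_colors:
  assumes P1: "is_mdg_path_of N n m A B lbar p1 P1" and P2: "is_mdg_path_of N n m A B lbar p2 P2"
    and "0 < a" "a < length p1" "0 < b" "b < length p2"
    and "P1 ! a = MX k t j1 L" "P2 ! b = MX k t j2 L"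
  shows "drop a (color_index p1) = drop b (color_index p2)"
  using assms(3-)
proof (induction L arbitrary: a b k t j1 j2)
  case 0
  then show ?case
    by (cases rule: mdg_path_nth_cases[OF P1, of a]) auto
next
  case (Suc L)
  have L1: "Suc L = length p1 - a \<and> k = ecol (p1 ! a)"
    using Suc.prems by (cases rule: mdg_path_nth_cases[OF P1, of a]) auto
  have L2: "Suc L = length p2 - b \<and> k = ecol (p2 ! b)"
    using Suc.prems by (cases rule: mdg_path_nth_cases[OF P2, of b]) auto
  have "drop (Suc a) (color_index p1) = drop (Suc b) (color_index p2)"
  proof (cases "L = 0")
    case True
    then have "length p1 = Suc a" "length p2 = Suc b"
      using L1 L2 by auto
    then show ?thesis
      by (simp add: color_index_def)
  next
    case False
    then have a': "Suc a < length p1" and b': "Suc b < length p2"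
      using L1 L2 by auto
    obtain t1 j1' where n1: "P1 ! Suc a = MX (ecol (p1 ! Suc a)) t1 j1' L"
      and "ecol (p1 ! Suc a) \<in> {1..N}" "t1 \<in> {1..N ^ (Suc L - 2)}"
      and "t = (ecol (p1 ! Suc a) - 1) * N ^ (Suc L - 2) + t1"
      using mdg_path_state_step[OF P1 Suc.prems(1) a' Suc.prems(5)] by auto
    moreover obtain t2 j2' where n2: "P2 ! Suc b = MX (ecol (p2 ! Suc b)) t2 j2' L"
      and "ecol (p2 ! Suc b) \<in> {1..N}" "t2 \<in> {1..N ^ (Suc L - 2)}"
      and "t = (ecol (p2 ! Suc b) - 1) * N ^ (Suc L - 2) + t2"
      using mdg_path_state_step[OF P2 Suc.prems(3) b' Suc.prems(6)] by auto
    ultimately have "ecol (p1 ! Suc a) = ecol (p2 ! Suc b) \<and> t1 = t2"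
      using mixed_radix_digits_eq by (metis atLeastAtMost_iff)
    then show ?thesis
      using Suc.IH[of "Suc a" "Suc b"] a' b' n1 n2 by simp
  qed
  then show ?case
    using drop_color_index_Suc L1 L2 Suc.prems by simp
qed

lemma mdg_path_input_vertex_colors:
  assumes w1: "is_walk N n m A B p1" and w2: "is_walk N n m A B p2"
    and P1: "is_mdg_path_of N n m A B lbar p1 P1" and P2: "is_mdg_path_of N n m A B lbar p2 P2"
    and eq: "P1 ! 0 = P2 ! 0"
  shows "length p1 = length p2 \<and> etail (p1 ! 0) = etail (p2 ! 0) \<and> color_index p1 = color_index p2"
proof -
  obtain l q k t where e1: "etail (p1 ! 0) = U l q" and u1: "P1 ! 0 = MU k t q l (length p1 - 1)"
    by (cases rule: mdg_path_nth_cases[OF P1, of 0]) auto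
  obtain l' q' k' t' where e2: "etail (p2 ! 0) = U l' q'" and u2: "P2 ! 0 = MU k' t' q' l' (length p2 - 1)"
    by (cases rule: mdg_path_nth_cases[OF P2, of 0]) auto
  have "0 < length p1" "0 < length p2"
    using w1 w2 unfolding is_walk_def by auto
  moreover have "length p1 - 1 = length p2 - 1"
    using u1 u2 eq by simp
  ultimately have "length p1 = length p2"
    by linarith
  with u1 u2 eq have same: "l' = l" "q' = q" "k' = k" "t' = t" "length p1 = length p2"
    by auto
  have "drop 1 (color_index p1) = drop 1 (color_index p2)"
  proof (cases "length p1 = 1")
    case True
    then show ?thesis
      using same by (simp add: color_index_def)
  next
    case False
    with \<open>0 < length p1\<close> same have "2 \<le> length p1" "2 \<le> length p2"
      by linarith+
    obtain j1 j2 where "P1 ! 1 = MX k t j1 (length p1 - 1)" "P2 ! 1 = MX k t j2 (length p1 - 1)"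
      using mdg_path_input_successor[OF P1 \<open>2 \<le> length p1\<close> u1]
        mdg_path_input_successor[OF P2 \<open>2 \<le> length p2\<close> u2] same by metis
    then show ?thesis
      using mdg_path_state_vertex_colors[OF P1 P2] \<open>2 \<le> length p1\<close> \<open>2 \<le> length p2\<close> by simp
  qed
  moreover have "ecol (p1 ! 0) = ecol (p2 ! 0)"
    using walk_input_edge_color[OF w1 e1] walk_input_edge_color[OF w2 e2] same by simp
  ultimately show ?thesis
    using drop_color_index_Suc[of 0 p1] drop_color_index_Suc[of 0 p2] \<open>0 < length p1\<close> \<open>0 < length p2\<close>
      e1 e2 same by simp
qed

lemma mdg_paths_common_vertex:
  assumes w1: "is_walk N n m A B p1" and w2: "is_walk N n m A B p2"
    and P1: "is_mdg_path_of N n m A B lbar p1 P1" and P2: "is_mdg_path_of N n m A B lbar p2 P2"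
    and a: "a \<le> length p1" and b: "b \<le> length p2" and eq: "P1 ! a = P2 ! b"
  shows "length p1 - a = length p2 - b \<and> walk_verts p1 ! a = walk_verts p2 ! b
    \<and> drop a (color_index p1) = drop b (color_index p2)"
  using P1 a
proof (cases rule: mdg_path_nth_cases)
  case (input l q k t)
  then have "b = 0"
    using eq by (cases rule: mdg_path_nth_cases[OF P2 b]) auto
  moreover have "p1 \<noteq> []" "p2 \<noteq> []"
    using w1 w2 unfolding is_walk_def by auto
  ultimately show ?thesis
    using mdg_path_input_vertex_colors[OF w1 w2 P1 P2] input eq by (simp add: nth_walk_verts)
next
  case (state j t)
  then have "0 < b \<and> b < length p2 \<and> ehead (p2 ! (b - 1)) = X j
      \<and> P2 ! b = MX (ecol (p1 ! a)) t j (length p1 - a) \<and> length p2 - b = length p1 - a"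
    using eq by (cases rule: mdg_path_nth_cases[OF P2 b]) auto
  then show ?thesis
    using mdg_path_state_vertex_colors[OF P1 P2] state by (simp add: nth_walk_verts)
next
  case (final j)
  then have "b = length p2 \<and> 0 < b \<and> ehead (p2 ! (b - 1)) = X j"
    using eq by (cases rule: mdg_path_nth_cases[OF P2 b]) auto
  then show ?thesis
    using final nth_walk_verts(2)[of a p1] nth_walk_verts(2)[of b p2] by (auto simp: color_index_def)
qed

theorem lemma3:
  fixes N n :: nat and m :: "nat \<Rightarrow> nat"
    and A B :: "nat \<Rightarrow> nat \<Rightarrow> nat \<Rightarrow> real"
    and lbar :: nat
    and pi pj :: "cedge list"
    and Pi Pj :: "mvert list"
  assumes wi: "is_input_state_walk N n m A B pi"
    and wj: "is_input_state_walk N n m A B pj"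
    and lbar: "lbar \<ge> max (length pi) (length pj)"
    and Pi: "is_mdg_path_of N n m A B lbar pi Pi"
    and Pj: "is_mdg_path_of N n m A B lbar pj Pj"
    and cond: "set (walk_verts pi) \<inter> set (walk_verts pj) = {}
      \<or> (ins (rev_walk pi) (rev_walk pj) \<noteq> None
         \<and> color_index (Pins (rev_walk pi) (rev_walk pj))
             \<noteq> color_index (Pins (rev_walk pj) (rev_walk pi)))"
  shows "set Pi \<inter> set Pj = {}"
proof (rule ccontr)
  assume "set Pi \<inter> set Pj \<noteq> {}"
  then obtain a b where a: "a \<le> length pi" and b: "b \<le> length pj" and eq: "Pi ! a = Pj ! b"
    using Pi Pj unfolding is_mdg_path_of_def by (metis disjoint_iff in_set_conv_nth less_Suc_eq_le)
  have w1: "is_walk N n m A B pi" and w2: "is_walk N n m A B pj"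
    using wi wj unfolding is_input_state_walk_def by auto
  note common = mdg_paths_common_vertex[OF w1 w2 Pi Pj a b eq]
  have "walk_verts pi ! a \<in> set (walk_verts pi) \<inter> set (walk_verts pj)"
    using common a b by (metis IntI length_walk_verts less_Suc_eq_le nth_mem)
  moreover have "color_index (Pins (rev_walk pi) (rev_walk pj)) = color_index (Pins (rev_walk pj) (rev_walk pi))"
    using rev_walks_Pins_color_index_eq[OF w1 w2 a b] common by blast
  ultimately show False
    using cond by blast
qed

end
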